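(* Let $B_J\in\mathbb R^{n\times n}$ satisfy $\|B_J\|_\infty<1$ (strict diagonal dominance by rows of $A=I-B_J$), and let $\mathcal B$ be any splitting of $B_J$. Then $\rho(T(\mathcal B))<1$, so the associated iterative scheme converges.
   Context: For $B\in\mathbb R^{n\times n}$, a splitting of $B$ of order $d\ge1$ is an ordered $d$-tuple $\mathcal B=(B_1,\dots,B_d)$ of real $n\times n$ matrices with $B_p\neq O$ for all $p$, $\sum_{p=1}^d B_p=B$, and $B_p\circ B_q=O$ (Hadamard product) for $p\ne q$. The iteration matrix of $\mathcal B$ is the $dn\times dn$ matrix $T(\mathcal B)=(I_{dn}-\mathcal L)^{-1}\mathcal U$, where $\mathcal L,\mathcal U$ are $d\times d$ block matrices with $n\times n$ blocks, $\mathcal L_{ij}=B_j$ if $i>j$ and $O$ otherwise, $\mathcal U_{ij}=B_j$ if $i\le j$ and $O$ otherwise. The associated scheme is $X^{(k+1)}=T(\mathcal B)X^{(k)}+\Gamma$. $\rho$ is spectral radius, $\|\cdot\|_\infty$ the maximum-row-sum norm. *)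

theory Defs
  imports "Jordan_Normal_Form.Spectral_Radius" "Jordan_Normal_Form.Gauss_Jordan_Elimination"
begin

definition inf_norm :: "real mat \<Rightarrow> real" where
  "inf_norm B = (MAX i \<in> {..<dim_row B}. \<Sum>j<dim_col B. \<bar>B $$ (i, j)\<bar>)"

definition hadamard :: "real mat \<Rightarrow> real mat \<Rightarrow> real mat" where
  "hadamard A C = mat (dim_row A) (dim_col A) (\<lambda>(i, j). A $$ (i, j) * C $$ (i, j))"

(* a splitting of B of order d = length Bs; Bs ! p is B_{p+1} *)
definition is_splitting :: "nat \<Rightarrow> real mat \<Rightarrow> real mat list \<Rightarrow> bool" where
  "is_splitting n B Bs \<longleftrightarrow>
     B \<in> carrier_mat n n \<and> length Bs \<ge> 1 \<and>
     (\<forall>p < length Bs. Bs ! p \<in> carrier_mat n n \<and> Bs ! p \<noteq> 0\<^sub>m n n) \<and>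
     foldr (+) Bs (0\<^sub>m n n) = B \<and>
     (\<forall>p < length Bs. \<forall>q < length Bs. p \<noteq> q \<longrightarrow> hadamard (Bs ! p) (Bs ! q) = 0\<^sub>m n n)"

(* block matrices: entry (i,j) of the dn x dn matrix lies in block (i div n, j div n) *)
definition blk_L :: "nat \<Rightarrow> real mat list \<Rightarrow> real mat" where
  "blk_L n Bs = mat (length Bs * n) (length Bs * n)
     (\<lambda>(i, j). if i div n > j div n then Bs ! (j div n) $$ (i mod n, j mod n) else 0)"

definition blk_U :: "nat \<Rightarrow> real mat list \<Rightarrow> real mat" where
  "blk_U n Bs = mat (length Bs * n) (length Bs * n)
     (\<lambda>(i, j). if i div n \<le> j div n then Bs ! (j div n) $$ (i mod n, j mod n) else 0)"

definition iter_mat :: "nat \<Rightarrow> real mat list \<Rightarrow> real mat" where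
  "iter_mat n Bs = the (mat_inverse (1\<^sub>m (length Bs * n) - blk_L n Bs)) * blk_U n Bs"

end

theory Submission
  imports Defs
begin

text \<open>
  Write \<open>T = T(\<B>)\<close> and let \<open>\<lambda>\<close> be an eigenvalue of \<open>T\<close> with eigenvector \<open>v\<close>.
  Since \<open>I - \<L>\<close> is unit lower triangular, \<open>(I - \<L>) T = \<U>\<close>, and so \<open>v = (\<L> + \<U>/\<lambda>) v\<close>.
  If \<open>|\<lambda>| \<ge> 1\<close>, comparing the largest component of \<open>v\<close> with this equation bounds it by
  the largest row sum of \<open>|\<L>| + |\<U>|\<close> times itself. Because \<open>\<L>\<close> and \<open>\<U>\<close> have disjoint
  supports, row \<open>i\<close> of \<open>|\<L>| + |\<U>|\<close> consists of the entries of row \<open>i mod n\<close> of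
  \<open>|B\<^sub>1|, \<dots>, |B\<^sub>d|\<close>; as the \<open>B\<^sub>p\<close> also have disjoint supports, its sum is that row
  of \<open>|B\<^sub>J|\<close>. So the row sums are at most \<open>\<parallel>B\<^sub>J\<parallel>\<^sub>\<infinity> < 1\<close>, which forces \<open>v = 0\<close>.
\<close>

lemma sum_lessThan_mult_blocks:
  fixes f :: "nat \<Rightarrow> 'a::comm_monoid_add"
  shows "sum f {..<d * n} = (\<Sum>p<d. \<Sum>m<n. f (p * n + m))"
proof (induction d)
  case 0
  then show ?case by simp
next
  case (Suc d)
  have "{..<Suc d * n} = {..<d * n} \<union> {d * n..<d * n + n}" by auto
  then have "sum f {..<Suc d * n} = sum f {..<d * n} + sum f {d * n..<d * n + n}"
    by (simp add: sum.union_disjoint ivl_disj_int)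
  also have "sum f {d * n..<d * n + n} = (\<Sum>m<n. f (d * n + m))"
    by (simp add: sum.shift_bounds_nat_ivl[where k = "d * n" and m = 0, simplified]
        lessThan_atLeast0 add.commute)
  finally show ?case using Suc by simp
qed

lemma sum_abs_eq_abs_sum_if_pairwise_mult_zero:
  fixes x :: "nat \<Rightarrow> real"
  assumes "\<And>p q. p < d \<Longrightarrow> q < d \<Longrightarrow> p \<noteq> q \<Longrightarrow> x p * x q = 0"
  shows "(\<Sum>p<d. \<bar>x p\<bar>) = \<bar>\<Sum>p<d. x p\<bar>"
proof (cases "\<forall>p<d. x p = 0")
  case True
  then show ?thesis by simp
next
  case False
  then obtain p0 where p0: "p0 < d" "x p0 \<noteq> 0" by auto
  have others: "x q = 0" if "q < d" "q \<noteq> p0" for q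
    using assms[OF p0(1) that(1)] that(2) p0(2) by auto
  have "(\<Sum>p<d. \<bar>x p\<bar>) = \<bar>x p0\<bar>" and "(\<Sum>p<d. x p) = x p0"
    using p0(1) others by (auto simp: sum.remove[of _ p0] intro!: sum.neutral)
  then show ?thesis by simp
qed

lemma index_foldr_plus_mat:
  assumes "\<And>B. B \<in> set Bs \<Longrightarrow> B \<in> carrier_mat n n" and "r < n" and "m < n"
  shows "foldr (+) Bs (0\<^sub>m n n) $$ (r, m) = (\<Sum>p<length Bs. Bs ! p $$ (r, m))"
proof -
  have "foldr (+) Bs (0\<^sub>m n n) \<in> carrier_mat n n \<and>
    foldr (+) Bs (0\<^sub>m n n) $$ (r, m) = (\<Sum>p<length Bs. Bs ! p $$ (r, m))"
    using assms(1)
  proof (induction Bs)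
    case (Cons B Bs)
    then show ?case
      by (simp only: length_Cons sum.lessThan_Suc_shift) (auto simp: assms(2,3))
  qed (simp add: assms(2,3))
  then show ?thesis by simp
qed

lemma row_abs_sum_le_inf_norm:
  assumes "B \<in> carrier_mat n n" and "r < n"
  shows "(\<Sum>m<n. \<bar>B $$ (r, m)\<bar>) \<le> inf_norm B"
  unfolding inf_norm_def using assms by (intro Max_ge) auto

lemma is_splitting_dim_pos:
  assumes "is_splitting n B Bs"
  shows "n > 0"
proof (rule ccontr)
  assume "\<not> n > 0"
  moreover have "Bs ! 0 \<in> carrier_mat n n" and "Bs ! 0 \<noteq> 0\<^sub>m n n"
    using assms unfolding is_splitting_def by (auto simp: Suc_le_eq)
  ultimately show False by (auto intro: eq_matI)
qed

text \<open>\<open>k\<close> runs over the columns of the block row \<open>[B\<^sub>1 \<dots> B\<^sub>d]\<close>; by the disjoint supports, its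
  absolute row sums are those of \<open>B\<close>.\<close>

lemma is_splitting_row_abs_sum:
  assumes spl: "is_splitting n B Bs" and r: "r < n"
  shows "(\<Sum>k<length Bs * n. \<bar>Bs ! (k div n) $$ (r, k mod n)\<bar>) = (\<Sum>m<n. \<bar>B $$ (r, m)\<bar>)"
proof -
  define d where "d = length Bs"
  from spl have carrier: "\<And>p. p < d \<Longrightarrow> Bs ! p \<in> carrier_mat n n"
    and sum_B: "foldr (+) Bs (0\<^sub>m n n) = B"
    and disjoint: "\<And>p q. p < d \<Longrightarrow> q < d \<Longrightarrow> p \<noteq> q \<Longrightarrow> hadamard (Bs ! p) (Bs ! q) = 0\<^sub>m n n"
    unfolding is_splitting_def d_def by auto
  have "(\<Sum>k<d * n. \<bar>Bs ! (k div n) $$ (r, k mod n)\<bar>) = (\<Sum>p<d. \<Sum>m<n. \<bar>Bs ! p $$ (r, m)\<bar>)"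
    using r by (simp add: sum_lessThan_mult_blocks)
  also have "\<dots> = (\<Sum>m<n. \<Sum>p<d. \<bar>Bs ! p $$ (r, m)\<bar>)"
    by (rule sum.swap)
  also have "\<dots> = (\<Sum>m<n. \<bar>\<Sum>p<d. Bs ! p $$ (r, m)\<bar>)"
  proof (intro sum.cong refl sum_abs_eq_abs_sum_if_pairwise_mult_zero)
    fix m p q assume "m \<in> {..<n}" "p < d" "q < d" "p \<noteq> q"
    then have "hadamard (Bs ! p) (Bs ! q) $$ (r, m) = 0"
      using disjoint r by auto
    then show "Bs ! p $$ (r, m) * Bs ! q $$ (r, m) = 0"
      using carrier[OF \<open>p < d\<close>] \<open>m \<in> {..<n}\<close> r unfolding hadamard_def by auto
  qed
  also have "\<dots> = (\<Sum>m<n. \<bar>B $$ (r, m)\<bar>)"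
  proof (intro sum.cong refl)
    fix m assume "m \<in> {..<n}"
    moreover have "\<And>C. C \<in> set Bs \<Longrightarrow> C \<in> carrier_mat n n"
      using carrier by (auto simp: d_def in_set_conv_nth)
    ultimately show "\<bar>\<Sum>p<d. Bs ! p $$ (r, m)\<bar> = \<bar>B $$ (r, m)\<bar>"
      using r by (simp add: index_foldr_plus_mat sum_B[symmetric] d_def)
  qed
  finally show ?thesis unfolding d_def .
qed

lemma eq_zero_vec_if_norm_dominated:
  fixes v :: "'a::real_normed_vector vec" and a :: "nat \<Rightarrow> nat \<Rightarrow> real"
  assumes v: "v \<in> carrier_vec N"
    and nonneg: "\<And>i k. i < N \<Longrightarrow> k < N \<Longrightarrow> a i k \<ge> 0"
    and row_sums: "\<And>i. i < N \<Longrightarrow> (\<Sum>k<N. a i k) < 1"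
    and dominated: "\<And>i. i < N \<Longrightarrow> norm (v $ i) \<le> (\<Sum>k<N. a i k * norm (v $ k))"
  shows "v = 0\<^sub>v N"
proof (cases "N = 0")
  case True
  then show ?thesis using v by (auto intro: eq_vecI)
next
  case False
  define M where "M = Max ((\<lambda>i. norm (v $ i)) ` {..<N})"
  have le_M: "norm (v $ i) \<le> M" if "i < N" for i
    unfolding M_def using that by (intro Max_ge) auto
  obtain i0 where i0: "i0 < N" "norm (v $ i0) = M"
    using Max_in[of "(\<lambda>i. norm (v $ i)) ` {..<N}"] False unfolding M_def by fastforce
  have "M \<le> (\<Sum>k<N. a i0 k * norm (v $ k))"
    using dominated[OF i0(1)] i0(2) by simp
  also have "\<dots> \<le> (\<Sum>k<N. a i0 k * M)"
    using nonneg i0(1) le_M by (intro sum_mono mult_left_mono) auto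
  also have "\<dots> = M * (\<Sum>k<N. a i0 k)"
    by (simp add: sum_distrib_left mult.commute)
  finally have "M \<le> 0"
    using row_sums[OF i0(1)] by (smt (verit) mult_le_cancel_left1)
  then have "v $ i = 0" if "i < N" for i
    using le_M[OF that] by (metis norm_le_zero_iff order_trans)
  then show ?thesis using v by (intro eq_vecI) auto
qed

text \<open>An eigenvector \<open>v\<close> of \<open>T\<close> for \<open>\<mu>\<close> satisfies \<open>v = (L + U/\<mu>) v\<close>.\<close>

lemma norm_eigenvalue_lt_1_if_row_sums_lt_1:
  fixes L U T :: "real mat"
  assumes L: "L \<in> carrier_mat N N" and U: "U \<in> carrier_mat N N" and T: "T \<in> carrier_mat N N"
    and factor: "(1\<^sub>m N - L) * T = U"
    and row_sums: "\<And>i. i < N \<Longrightarrow> (\<Sum>k<N. \<bar>L $$ (i, k)\<bar> + \<bar>U $$ (i, k)\<bar>) < 1"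
    and ev: "eigenvalue (map_mat complex_of_real T) \<mu>"
  shows "cmod \<mu> < 1"
proof (rule ccontr)
  assume "\<not> cmod \<mu> < 1"
  then have mu_ge_1: "cmod \<mu> \<ge> 1" by simp
  then have "\<mu> \<noteq> 0" by auto
  let ?c = "map_mat complex_of_real"
  from ev obtain v where v: "v \<in> carrier_vec N" "v \<noteq> 0\<^sub>v N" "?c T *\<^sub>v v = \<mu> \<cdot>\<^sub>v v"
    unfolding eigenvalue_def eigenvector_def using T by auto
  have cU: "?c U = (1\<^sub>m N - ?c L) * ?c T"
  proof -
    have "?c (1\<^sub>m N - L) = 1\<^sub>m N - ?c L"
      using L by (intro eq_matI) auto
    moreover have "?c ((1\<^sub>m N - L) * T) = ?c (1\<^sub>m N - L) * ?c T"
      using L T by (intro of_real_hom.mat_hom_mult) auto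
    ultimately show ?thesis
      using factor by simp
  qed
  have eigen_eq: "?c U *\<^sub>v v = \<mu> \<cdot>\<^sub>v v - \<mu> \<cdot>\<^sub>v (?c L *\<^sub>v v)"
  proof -
    have "?c U *\<^sub>v v = (1\<^sub>m N - ?c L) *\<^sub>v (\<mu> \<cdot>\<^sub>v v)"
      unfolding cU v(3)[symmetric] by (rule assoc_mult_mat_vec) (use L T v(1) in auto)
    also have "\<dots> = \<mu> \<cdot>\<^sub>v v - \<mu> \<cdot>\<^sub>v (?c L *\<^sub>v v)"
      using L v(1) by (simp add: minus_mult_distrib_mat_vec[of _ N N] mult_mat_vec[of _ N N])
    finally show ?thesis .
  qed
  have fixed_point: "v $ i = (\<Sum>k<N. (of_real (U $$ (i, k)) / \<mu> + of_real (L $$ (i, k))) * v $ k)"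
    if "i < N" for i
  proof -
    have "(\<Sum>k<N. of_real (U $$ (i, k)) * v $ k) = \<mu> * v $ i - \<mu> * (\<Sum>k<N. of_real (L $$ (i, k)) * v $ k)"
      using arg_cong[OF eigen_eq, of "\<lambda>w. w $ i"] that L U v(1)
      by (simp add: scalar_prod_def lessThan_atLeast0)
    then have "v $ i = (\<Sum>k<N. of_real (U $$ (i, k)) * v $ k) / \<mu> + (\<Sum>k<N. of_real (L $$ (i, k)) * v $ k)"
      using \<open>\<mu> \<noteq> 0\<close> by (simp add: field_simps)
    then show ?thesis
      by (simp add: sum_divide_distrib sum.distrib distrib_right)
  qed
  have coeff_bound: "cmod (of_real (U $$ (i, k)) / \<mu> + of_real (L $$ (i, k))) \<le> \<bar>L $$ (i, k)\<bar> + \<bar>U $$ (i, k)\<bar>"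
    for i k
  proof -
    have "cmod (of_real (U $$ (i, k)) / \<mu>) \<le> \<bar>U $$ (i, k)\<bar>"
      using mu_ge_1 by (simp add: norm_divide divide_le_eq mult_le_cancel_left1 mult_left_le)
    then show ?thesis
      using norm_triangle_ineq[of "of_real (U $$ (i, k)) / \<mu>" "of_real (L $$ (i, k)) :: complex"]
      by simp
  qed
  have "v = 0\<^sub>v N"
  proof (rule eq_zero_vec_if_norm_dominated[OF v(1) _ row_sums])
    fix i assume "i < N"
    show "cmod (v $ i) \<le> (\<Sum>k<N. (\<bar>L $$ (i, k)\<bar> + \<bar>U $$ (i, k)\<bar>) * cmod (v $ k))"
      unfolding fixed_point[OF \<open>i < N\<close>]
      by (rule order_trans[OF norm_sum]) (auto simp: norm_mult intro!: sum_mono mult_right_mono coeff_bound)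
  qed auto
  with v(2) show False ..
qed

lemma det_one_minus_strictly_lower_triangular:
  fixes L :: "'a::comm_ring_1 mat"
  assumes L: "L \<in> carrier_mat N N" and upper_zero: "\<And>i j. i \<le> j \<Longrightarrow> j < N \<Longrightarrow> L $$ (i, j) = 0"
  shows "det (1\<^sub>m N - L) = 1"
proof -
  have "det (1\<^sub>m N - L) = prod_list (diag_mat (1\<^sub>m N - L))"
    using L upper_zero by (intro det_lower_triangular[where n = N]) auto
  also have "diag_mat (1\<^sub>m N - L) = replicate N 1"
    using L upper_zero by (intro nth_equalityI) (auto simp: diag_mat_def)
  finally show ?thesis by simp
qed

lemma blk_L_carrier: "blk_L n Bs \<in> carrier_mat (length Bs * n) (length Bs * n)"
  by (simp add: blk_L_def)

lemma blk_U_carrier: "blk_U n Bs \<in> carrier_mat (length Bs * n) (length Bs * n)"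
  by (simp add: blk_U_def)

lemma blk_L_upper_zero:
  assumes "i \<le> j" and "j < length Bs * n"
  shows "blk_L n Bs $$ (i, j) = 0"
  using assms div_le_mono[OF assms(1), of n] by (simp add: blk_L_def)

lemma abs_blk_L_plus_abs_blk_U:
  assumes "i < length Bs * n" and "k < length Bs * n"
  shows "\<bar>blk_L n Bs $$ (i, k)\<bar> + \<bar>blk_U n Bs $$ (i, k)\<bar> = \<bar>Bs ! (k div n) $$ (i mod n, k mod n)\<bar>"
  using assms by (simp add: blk_L_def blk_U_def)

lemma iter_mat_carrier_and_factor:
  fixes n :: nat and Bs :: "real mat list"
  defines "N \<equiv> length Bs * n"
  shows "iter_mat n Bs \<in> carrier_mat N N"
    and "(1\<^sub>m N - blk_L n Bs) * iter_mat n Bs = blk_U n Bs"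
proof -
  define A where "A = 1\<^sub>m N - blk_L n Bs"
  have A: "A \<in> carrier_mat N N"
    unfolding A_def N_def by (intro minus_carrier_mat blk_L_carrier)
  have "det A = 1"
    unfolding A_def N_def by (intro det_one_minus_strictly_lower_triangular blk_L_carrier blk_L_upper_zero)
  then have "A \<in> Units (ring_mat TYPE(real) N ())"
    using det_non_zero_imp_unit[OF A] by simp
  then obtain A' where A': "mat_inverse A = Some A'"
    using mat_inverse(1)[OF A] by fastforce
  then have inv: "A * A' = 1\<^sub>m N" and A'_carrier: "A' \<in> carrier_mat N N"
    using mat_inverse(2)[OF A] by auto
  have T: "iter_mat n Bs = A' * blk_U n Bs"
    unfolding iter_mat_def using A' by (simp add: A_def N_def)
  show "iter_mat n Bs \<in> carrier_mat N N"
    unfolding T using A'_carrier blk_U_carrier by (auto simp: N_def)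
  have "A * iter_mat n Bs = (A * A') * blk_U n Bs"
    unfolding T using A A'_carrier blk_U_carrier by (simp add: assoc_mult_mat[of _ N N _ N _ N] N_def)
  then show "(1\<^sub>m N - blk_L n Bs) * iter_mat n Bs = blk_U n Bs"
    using inv left_mult_one_mat[OF blk_U_carrier] by (simp add: A_def N_def)
qed

theorem corollary4p1:
  fixes n :: nat and BJ :: "real mat" and Bs :: "real mat list"
  assumes "BJ \<in> carrier_mat n n"
    and "inf_norm BJ < 1"
    and "is_splitting n BJ Bs"
  shows "spectral_radius (map_mat complex_of_real (iter_mat n Bs)) < 1"
proof -
  define N where "N = length Bs * n"
  have "N > 0"
    using is_splitting_dim_pos[OF assms(3)] assms(3) by (auto simp: N_def is_splitting_def)
  have row_sums: "(\<Sum>k<N. \<bar>blk_L n Bs $$ (i, k)\<bar> + \<bar>blk_U n Bs $$ (i, k)\<bar>) < 1" if "i < N" for i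
  proof -
    have "i mod n < n"
      using is_splitting_dim_pos[OF assms(3)] by simp
    have "(\<Sum>k<N. \<bar>blk_L n Bs $$ (i, k)\<bar> + \<bar>blk_U n Bs $$ (i, k)\<bar>)
        = (\<Sum>k<N. \<bar>Bs ! (k div n) $$ (i mod n, k mod n)\<bar>)"
      using that by (intro sum.cong) (auto simp: N_def abs_blk_L_plus_abs_blk_U)
    also have "\<dots> = (\<Sum>m<n. \<bar>BJ $$ (i mod n, m)\<bar>)"
      unfolding N_def by (rule is_splitting_row_abs_sum[OF assms(3) \<open>i mod n < n\<close>])
    also have "\<dots> \<le> inf_norm BJ"
      by (rule row_abs_sum_le_inf_norm[OF assms(1) \<open>i mod n < n\<close>])
    finally show ?thesis using assms(2) by simp
  qed
  let ?T = "map_mat complex_of_real (iter_mat n Bs)"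
  have "spectral_radius ?T \<in> cmod ` spectrum ?T"
    using iter_mat_carrier_and_factor(1) \<open>N > 0\<close>
    by (intro spectral_radius_mem_max(1)[where n = N]) (auto simp: N_def)
  moreover have "cmod \<mu> < 1" if "\<mu> \<in> spectrum ?T" for \<mu>
  proof (rule norm_eigenvalue_lt_1_if_row_sums_lt_1)
    show "blk_L n Bs \<in> carrier_mat N N" "blk_U n Bs \<in> carrier_mat N N"
      "iter_mat n Bs \<in> carrier_mat N N" "(1\<^sub>m N - blk_L n Bs) * iter_mat n Bs = blk_U n Bs"
      unfolding N_def by (fact blk_L_carrier blk_U_carrier iter_mat_carrier_and_factor)+
    show "eigenvalue ?T \<mu>"
      using that by (simp add: spectrum_def)
  qed (fact row_sums)
  ultimately show ?thesis by auto
qed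

end
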